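(* Let $K\subset\mathbb{R}^n$ be a proper cone and let $\mathcal{S}=\bigcup_{t}\mathcal{S}_t\subset\pi(K)$ be a $K$-irreducible semigroup generated in one of the three ways (discrete, continuous, or switched with jumps) described in the context. If $\rho(\mathcal{S})=1$, then $\mathcal{S}$ is bounded as a subset of $\mathbb{R}^{n\times n}$.
   Context: A proper cone $K\subset\mathbb{R}^n$ is a nonempty set with $rK\subset K$ for all $r>0$ which is convex, pointed, closed and has nonempty interior. Write $x\ge_K y$ if $x-y\in K$. A face of $K$ is a cone $F\subseteq K$ with: $x\in F$, $x\ge_K y\ge_K0$ imply $y\in F$; $\{0\},K$ are trivial faces. $\pi(K)=\{A: AK\subset K\}$; $A\in\pi(K)$ is $K$-irreducible if no nontrivial face $F$ has $AF\subset F$. Semigroups: (A) discrete: for compact $\mathcal{M}\subset\mathbb{R}^{n\times n}$, $\mathcal{S}_0=\{I\}$, $\mathcal{S}_t=\{A_{t-1}\cdots A_0:A_s\in\mathcal{M}\}$, $t\in\mathbb{N}$. (B) continuous: for compact $\mathcal{M}$, $\mathcal{S}_0=\{I\}$, $\mathcal{S}_t=\{\Phi_\sigma(t)\}$ over measurable $\sigma:[0,t]\to\mathcal{M}$, where $\dot\Phi_\sigma=\sigma\Phi_\sigma$, $\Phi_\sigma(0)=I$. (C) with jumps: for compact $\mathcal{M}\subset\mathbb{R}^{n\times n}\times\mathbb{R}^{n\times n}$ of pairs $(A,\Pi)$ with $\Pi^2=\Pi$, $A\Pi=\Pi A$, and piecewise constant right-continuous $\sigma:\mathbb{R}_+\to\mathcal{M}$,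 $\sigma(s)=(A_{\sigma(s)},\Pi_{\sigma(s)})$, with switching times $0=t_0<t_1<\dots$, $t_k\to\infty$, for $t\in[t_k,t_{k+1})$ set $\Phi_\sigma(t)=e^{A_{\sigma(t_k)}(t-t_k)}\Pi_{\sigma(t_k)}e^{A_{\sigma(t_{k-1})}(t_k-t_{k-1})}\Pi_{\sigma(t_{k-1})}\cdots e^{A_{\sigma(t_0)}(t_1-t_0)}\Pi_{\sigma(t_0)}$, and $\mathcal{S}_t$ is the set of all such $\Phi_\sigma(t)$. In each case $\mathcal{S}=\bigcup_t\mathcal{S}_t$. Joint spectral radius: $\rho(\mathcal{S})=\lim_{t\to\infty}\sup\{\|S\|:S\in\mathcal{S}_t\}^{1/t}$. The semigroup $\mathcal{S}\subset\pi(K)$ is $K$-irreducible if there exists $t>0$ such that $\operatorname{conv}\mathcal{S}_t$ contains a $K$-irreducible element. *)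

theory Defs
  imports "HOL-Analysis.Analysis"
begin

definition is_cone :: "(real^'n) set \<Rightarrow> bool" where
  "is_cone C \<longleftrightarrow> C \<noteq> {} \<and> (\<forall>r>0. \<forall>x\<in>C. r *\<^sub>R x \<in> C)"

definition proper_cone :: "(real^'n) set \<Rightarrow> bool" where
  "proper_cone K \<longleftrightarrow> is_cone K \<and> convex K \<and> (\<forall>x. x \<in> K \<and> - x \<in> K \<longrightarrow> x = 0)
     \<and> closed K \<and> interior K \<noteq> {}"

definition cone_ge :: "(real^'n) set \<Rightarrow> real^'n \<Rightarrow> real^'n \<Rightarrow> bool" where
  "cone_ge K x y \<longleftrightarrow> x - y \<in> K"

definition is_face :: "(real^'n) set \<Rightarrow> (real^'n) set \<Rightarrow> bool" where
  "is_face K F \<longleftrightarrow> is_cone F \<and> convex F \<and> F \<subseteq> K \<and>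
     (\<forall>x y. x \<in> F \<and> cone_ge K x y \<and> cone_ge K y 0 \<longrightarrow> y \<in> F)"

definition pi_cone :: "(real^'n) set \<Rightarrow> (real^'n^'n) set" where
  "pi_cone K = {A. \<forall>x\<in>K. A *v x \<in> K}"

definition K_irreducible :: "(real^'n) set \<Rightarrow> real^'n^'n \<Rightarrow> bool" where
  "K_irreducible K A \<longleftrightarrow> A \<in> pi_cone K \<and>
     \<not> (\<exists>F. is_face K F \<and> F \<noteq> {0} \<and> F \<noteq> K \<and> (\<forall>x\<in>F. A *v x \<in> F))"

primrec matpow :: "real^'n^'n \<Rightarrow> nat \<Rightarrow> real^'n^'n" where
  "matpow A 0 = mat 1"
| "matpow A (Suc k) = A ** matpow A k"

definition mexp :: "real^'n^'n \<Rightarrow> real^'n^'n" where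
  "mexp A = (\<Sum>k. (1 / fact k) *\<^sub>R matpow A k)"

primrec disc_sg :: "(real^'n^'n) set \<Rightarrow> nat \<Rightarrow> (real^'n^'n) set" where
  "disc_sg M 0 = {mat 1}"
| "disc_sg M (Suc t) = {A ** B | A B. A \<in> M \<and> B \<in> disc_sg M t}"

text \<open>(B) continuous: Phi is the (Caratheodory) solution of Phi' = sigma Phi, Phi(0) = I,
  written in integral form, for measurable sigma : [0,t] \<rightarrow> M.\<close>
definition cont_sg :: "(real^'n^'n) set \<Rightarrow> real \<Rightarrow> (real^'n^'n) set" where
  "cont_sg M t = {\<Phi> t | \<sigma> \<Phi>.
      \<sigma> \<in> borel_measurable (lebesgue_on {0..t}) \<and> (\<forall>s\<in>{0..t}. \<sigma> s \<in> M) \<and>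
      continuous_on {0..t} \<Phi> \<and>
      (\<forall>s\<in>{0..t}. ((\<lambda>r. \<sigma> r ** \<Phi> r) has_integral (\<Phi> s - mat 1)) {0..s})}"

text \<open>For t in [t_k, t_(k+1)), Phi_sigma(t) only depends on the modes
  m_0,...,m_k and the switching times 0 = t_0 < ... < t_k \<le> t. The list ms gives the modes
  (m_0 first), ts the switching times (t_0 first).\<close>
fun jump_prod :: "((real^'n^'n) \<times> (real^'n^'n)) list \<Rightarrow> real list \<Rightarrow> real \<Rightarrow> real^'n^'n" where
  "jump_prod [] _ _ = mat 1"
| "jump_prod _ [] _ = mat 1"
| "jump_prod ((A,P) # ms) (t0 # ts) t =
     (let t1 = (case ts of [] \<Rightarrow> t | (s # _) \<Rightarrow> s)
      in jump_prod ms ts t ** (mexp ((t1 - t0) *\<^sub>R A) ** P))"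

definition jump_sg :: "((real^'n^'n) \<times> (real^'n^'n)) set \<Rightarrow> real \<Rightarrow> (real^'n^'n) set" where
  "jump_sg M t = {jump_prod ms ts t | ms ts.
      ms \<noteq> [] \<and> length ts = length ms \<and> set ms \<subseteq> M \<and>
      hd ts = 0 \<and> sorted_wrt (<) ts \<and> last ts \<le> t}"

definition jump_modes :: "((real^'n^'n) \<times> (real^'n^'n)) set \<Rightarrow> bool" where
  "jump_modes M \<longleftrightarrow> compact M \<and> (\<forall>(A,P)\<in>M. P ** P = P \<and> A ** P = P ** A)"

definition jsr_disc_is :: "(nat \<Rightarrow> (real^'n^'n) set) \<Rightarrow> real \<Rightarrow> bool" where
  "jsr_disc_is St r \<longleftrightarrow> (\<forall>\<^sub>F t in sequentially. bounded (St t)) \<and>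
     ((\<lambda>t. (SUP S\<in>St t. norm S) powr (1 / real t)) \<longlongrightarrow> r) sequentially"

definition jsr_cont_is :: "(real \<Rightarrow> (real^'n^'n) set) \<Rightarrow> real \<Rightarrow> bool" where
  "jsr_cont_is St r \<longleftrightarrow> (\<forall>\<^sub>F t in at_top. bounded (St t)) \<and>
     ((\<lambda>t. (SUP S\<in>St t. norm S) powr (1 / t)) \<longlongrightarrow> r) at_top"

definition irred_disc :: "(real^'n) set \<Rightarrow> (nat \<Rightarrow> (real^'n^'n) set) \<Rightarrow> bool" where
  "irred_disc K St \<longleftrightarrow> (\<exists>t>0. \<exists>A\<in>convex hull (St t). K_irreducible K A)"

definition irred_cont :: "(real^'n) set \<Rightarrow> (real \<Rightarrow> (real^'n^'n) set) \<Rightarrow> bool" where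
  "irred_cont K St \<longleftrightarrow> (\<exists>t>0. \<exists>A\<in>convex hull (St t). K_irreducible K A)"

end

theory Submission
  imports Defs
begin

text \<open>If \<open>\<S>\<close> were unbounded, irreducibility would force exponential growth. By compactness,
  irreducibility of an element \<open>B\<close> of \<open>conv \<S>\<^sub>T\<close> becomes quantitative: there are \<open>c > 0\<close> and
  \<open>J\<close> such that all \<open>X, Y \<in> \<pi>(K)\<close> admit some \<open>j \<le> J\<close> with \<open>\<parallel>X B\<^sup>j Y\<parallel> \<ge> c \<parallel>X\<parallel> \<parallel>Y\<parallel>\<close>, and this
  persists for all matrices near \<open>B\<close>. As \<open>X B\<^sup>j Y\<close> is linear in \<open>B\<^sup>j \<in> conv \<S>\<^bsub>jT\<^esub>\<close>, the factor
  \<open>B\<^sup>j\<close> may be replaced by an element of \<open>\<S>\<^bsub>jT\<^esub>\<close>. Starting from \<open>X\<^sub>0 \<in> \<S>\<^sub>a\<close> with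
  \<open>c \<parallel>X\<^sub>0\<parallel> \<ge> 2\<close> and repeatedly appending such a factor followed by \<open>X\<^sub>0\<close> doubles the norm while
  the time grows by at most \<open>a + J T\<close>, which contradicts \<open>\<rho>(\<S>) = 1\<close>. With jumps, only the
  products whose last switch precedes the final time are closed under multiplication; they
  merely approximate the irreducible element, hence the uniformity near \<open>B\<close>.\<close>

lemma norm_matrix_mult_le: "norm ((A::real^'n^'m) ** (B::real^'p^'n)) \<le> norm A * norm B"
proof -
  have norm_sq: "(norm C)\<^sup>2 = (\<Sum>i\<in>UNIV. \<Sum>j\<in>UNIV. (C$i$j)\<^sup>2)" for C :: "real^'q^'r"
    unfolding power2_norm_eq_inner inner_vec_def inner_real_def by (simp add: power2_eq_square)
  have "(norm (A ** B))\<^sup>2 \<le> (\<Sum>i\<in>UNIV. \<Sum>j\<in>UNIV. (\<Sum>k\<in>UNIV. (A$i$k)\<^sup>2) * (\<Sum>k\<in>UNIV. (B$k$j)\<^sup>2))"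
    unfolding norm_sq matrix_matrix_mult_def
    by (intro sum_mono) (simp add: Cauchy_Schwarz_ineq_sum)
  also have "\<dots> = (\<Sum>i\<in>UNIV. \<Sum>k\<in>UNIV. (A$i$k)\<^sup>2) * (\<Sum>j\<in>UNIV. \<Sum>k\<in>UNIV. (B$k$j)\<^sup>2)"
    by (rule sum_product[symmetric])
  also have "\<dots> = (norm A * norm B)\<^sup>2"
    unfolding power_mult_distrib norm_sq by (subst (2) sum.swap) (rule refl)
  finally show ?thesis by (rule power2_le_imp_le) simp
qed

lemma bounded_bilinear_matrix_matrix_mult:
  "bounded_bilinear ((**) :: real^'n^'m \<Rightarrow> real^'p^'n \<Rightarrow> real^'p^'m)"
proof
  show "\<exists>K. \<forall>(A::real^'n^'m) (B::real^'p^'n). norm (A ** B) \<le> norm A * norm B * K"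
    using norm_matrix_mult_le by (metis mult.right_neutral)
  show "(A + B) ** C = A ** C + B ** C" for A B :: "real^'n^'m" and C :: "real^'p^'n"
    by (vector matrix_matrix_mult_def sum.distrib[symmetric] field_simps)
qed (simp_all add: matrix_add_ldistrib matrix_scalar_ac scalar_matrix_assoc[symmetric])

lemma continuous_on_matrix_mult [continuous_intros]:
  fixes f :: "'a::topological_space \<Rightarrow> real^'n^'m" and g :: "'a \<Rightarrow> real^'p^'n"
  shows "continuous_on S f \<Longrightarrow> continuous_on S g \<Longrightarrow> continuous_on S (\<lambda>x. f x ** g x)"
  by (rule bounded_bilinear.continuous_on[OF bounded_bilinear_matrix_matrix_mult])

lemma continuous_on_matrix_vector_mult [continuous_intros]:
  fixes f :: "'a::topological_space \<Rightarrow> real^'n^'m"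
  shows "continuous_on S f \<Longrightarrow> continuous_on S (\<lambda>s. f s *v x)"
  unfolding matrix_vector_mult_def by (intro continuous_intros)

lemma matpow_Suc_right: "matpow A (Suc j) = matpow A j ** A"
  by (induction j) (auto simp: matrix_mul_assoc)

lemma matpow_scaleR: "matpow (r *\<^sub>R A) k = (r ^ k) *\<^sub>R matpow A k"
  by (induction k) (simp_all add: matrix_scalar_ac scalar_matrix_assoc[symmetric])

lemma norm_matpow_le: "norm (matpow (A::real^'n^'n) k) \<le> norm (mat 1 :: real^'n^'n) * norm A ^ k"
proof (induction k)
  case (Suc k)
  have "norm (matpow A (Suc k)) \<le> norm A * norm (matpow A k)"
    by (simp add: norm_matrix_mult_le)
  also have "\<dots> \<le> norm A * (norm (mat 1 :: real^'n^'n) * norm A ^ k)"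
    using Suc by (intro mult_left_mono) auto
  finally show ?case by (simp add: algebra_simps)
qed simp

lemma continuous_on_matpow [continuous_intros]:
  "continuous_on S f \<Longrightarrow> continuous_on S (\<lambda>x. matpow (f x) j)"
  by (induction j) (auto intro: continuous_intros)

lemma convex_hull_matrix_mult:
  fixes A :: "real^'n^'m" and B :: "real^'p^'n"
  assumes A: "A \<in> convex hull S" and B: "B \<in> convex hull T"
  shows "A ** B \<in> convex hull {X ** Y | X Y. X \<in> S \<and> Y \<in> T}"
proof -
  define H where "H = convex hull {X ** Y | X Y. X \<in> S \<and> Y \<in> T}"
  have linear_left: "linear (\<lambda>Y. X ** Y)" for X :: "real^'n^'m"
    by (rule linearI) (simp_all add: matrix_add_ldistrib matrix_scalar_ac scalar_matrix_assoc[symmetric])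
  have linear_right: "linear (\<lambda>X. X ** Y)" for Y :: "real^'p^'n"
    by (rule linearI) (simp_all add: bounded_bilinear.add_left[OF bounded_bilinear_matrix_matrix_mult]
        scalar_matrix_assoc)
  have "X ** B \<in> H" if X: "X \<in> S" for X
  proof -
    have "T \<subseteq> (\<lambda>Y. X ** Y) -` H"
      using X unfolding H_def by (auto intro: hull_inc)
    then have "convex hull T \<subseteq> (\<lambda>Y. X ** Y) -` H"
      by (rule hull_minimal) (simp add: H_def convex_linear_vimage[OF linear_left])
    then show ?thesis using B by blast
  qed
  then have "convex hull S \<subseteq> (\<lambda>X. X ** B) -` H"
    by (intro hull_minimal) (auto simp: H_def convex_linear_vimage[OF linear_right])
  then show ?thesis using A unfolding H_def by blast
qed

lemma linear_norm_le_on_convex_hull: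
  fixes f :: "'a::real_vector \<Rightarrow> 'b::real_normed_vector"
  assumes f: "linear f" and x: "x \<in> convex hull S"
  obtains y where "y \<in> S" "norm (f x) \<le> norm (f y)"
proof -
  have "\<exists>y\<in>S. norm (f x) \<le> norm (f y)"
  proof (rule ccontr)
    assume "\<not> ?thesis"
    then have "S \<subseteq> f -` ball 0 (norm (f x))"
      by (auto simp: not_le)
    then have "convex hull S \<subseteq> f -` ball 0 (norm (f x))"
      by (rule hull_minimal) (rule convex_linear_vimage[OF f convex_ball])
    then show False using x by auto
  qed
  then show ?thesis using that by blast
qed

lemma proper_cone_span: "proper_cone K \<Longrightarrow> span K = UNIV"
  unfolding proper_cone_def
  by (metis dim_eq_full dim_subset_UNIV empty_interior_lowdim le_neq_implies_less)

lemma proper_cone_matrix_eq_0: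
  assumes "proper_cone K" and "\<And>x. x \<in> K \<Longrightarrow> A *v x = 0"
  shows "A = 0"
proof -
  have "A *v x = 0" for x
    using linear_eq_0_on_span[OF matrix_vector_mul_linear, of K A x] assms proper_cone_span by auto
  then show ?thesis by (simp add: matrix_eq)
qed

lemma proper_cone_zero:
  assumes "proper_cone K" shows "0 \<in> K"
proof -
  from assms obtain x where x: "x \<in> K" and K: "closed K" "\<And>r y. r > 0 \<Longrightarrow> y \<in> K \<Longrightarrow> r *\<^sub>R y \<in> K"
    unfolding proper_cone_def is_cone_def by auto
  have "(\<lambda>n. inverse (real (Suc n)) *\<^sub>R x) \<longlonglongrightarrow> 0 *\<^sub>R x"
    by (intro tendsto_intros LIMSEQ_inverse_real_of_nat)
  moreover have "\<forall>n. inverse (real (Suc n)) *\<^sub>R x \<in> K"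
    using K(2) x by simp
  ultimately show ?thesis
    using closed_sequentially[OF K(1)] by fastforce
qed

lemma proper_cone_scaleR: "proper_cone K \<Longrightarrow> x \<in> K \<Longrightarrow> 0 \<le> r \<Longrightarrow> r *\<^sub>R x \<in> K"
  using proper_cone_zero[of K] unfolding proper_cone_def is_cone_def
  by (cases "r = 0") auto

lemma pi_cone_mult: "A \<in> pi_cone K \<Longrightarrow> B \<in> pi_cone K \<Longrightarrow> A ** B \<in> pi_cone K"
  unfolding pi_cone_def by (simp add: matrix_vector_mul_assoc[symmetric])

lemma mat_1_in_pi_cone: "mat 1 \<in> pi_cone K"
  unfolding pi_cone_def by simp

lemma pi_cone_scaleR: "proper_cone K \<Longrightarrow> A \<in> pi_cone K \<Longrightarrow> 0 \<le> r \<Longrightarrow> r *\<^sub>R A \<in> pi_cone K"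
  unfolding pi_cone_def by (simp add: scaleR_matrix_vector_assoc[symmetric] proper_cone_scaleR)

lemma closed_pi_cone:
  fixes K :: "(real^'n) set"
  assumes "proper_cone K" shows "closed (pi_cone K)"
proof -
  have "pi_cone K = (\<Inter>x\<in>K. (\<lambda>A. A *v x) -` K)"
    unfolding pi_cone_def by auto
  moreover have "closed ((\<lambda>A::real^'n^'n. A *v x) -` K)" for x
    using assms unfolding proper_cone_def
    by (intro closed_vimage continuous_intros) auto
  ultimately show ?thesis by auto
qed

lemma matpow_in_pi_cone: "A \<in> pi_cone K \<Longrightarrow> matpow A j \<in> pi_cone K"
  by (induction j) (auto simp: mat_1_in_pi_cone pi_cone_mult)

section \<open>Irreducible matrices\<close>

definition orbit_annihilator :: "(real^'n) set \<Rightarrow> real^'n^'n \<Rightarrow> real^'n^'n \<Rightarrow> (real^'n) set" where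
  "orbit_annihilator K X B = {x \<in> K. \<forall>j. (X ** matpow B j) *v x = 0}"

lemma is_face_orbit_annihilator:
  assumes K: "proper_cone K" and X: "X \<in> pi_cone K" and B: "B \<in> pi_cone K"
  shows "is_face K (orbit_annihilator K X B)"
proof -
  let ?F = "orbit_annihilator K X B"
  have XB: "X ** matpow B j \<in> pi_cone K" for j
    using X B by (simp add: pi_cone_mult matpow_in_pi_cone)
  have "is_cone ?F"
    using proper_cone_zero[OF K] proper_cone_scaleR[OF K]
    unfolding is_cone_def orbit_annihilator_def by (auto simp: matrix_vector_mult_scaleR)
  moreover have "convex ?F"
    using K unfolding proper_cone_def orbit_annihilator_def convex_def
    by (auto simp: matrix_vector_right_distrib matrix_vector_mult_scaleR)
  moreover have "y \<in> ?F" if x: "x \<in> ?F" and "cone_ge K x y" "cone_ge K y 0" for x y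
  proof -
    have y: "y \<in> K" "x - y \<in> K" using that unfolding cone_ge_def by auto
    have "(X ** matpow B j) *v y = 0" for j
    proof -
      have "(X ** matpow B j) *v y \<in> K" "(X ** matpow B j) *v (x - y) \<in> K"
        using XB y unfolding pi_cone_def by blast+
      moreover have "(X ** matpow B j) *v x = 0"
        using x unfolding orbit_annihilator_def by blast
      ultimately show ?thesis
        using K unfolding proper_cone_def by (simp add: matrix_vector_mult_diff_distrib)
    qed
    then show ?thesis using y unfolding orbit_annihilator_def by blast
  qed
  ultimately show ?thesis
    unfolding is_face_def orbit_annihilator_def by blast
qed

lemma orbit_annihilator_invariant:
  assumes "B \<in> pi_cone K" and "x \<in> orbit_annihilator K X B"
  shows "B *v x \<in> orbit_annihilator K X B"
proof -
  have "(X ** matpow B j) *v (B *v x) = (X ** matpow B (Suc j)) *v x" for j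
    by (simp only: matpow_Suc_right matrix_vector_mul_assoc matrix_mul_assoc)
  then show ?thesis
    using assms unfolding orbit_annihilator_def pi_cone_def by (auto simp del: matpow.simps)
qed

lemma K_irreducible_product_nonzero:
  assumes K: "proper_cone K" and irr: "K_irreducible K B"
    and X: "X \<in> pi_cone K" "X \<noteq> 0" and Y: "Y \<in> pi_cone K" "Y \<noteq> 0"
  shows "\<exists>j. X ** matpow B j ** Y \<noteq> 0"
proof -
  have B: "B \<in> pi_cone K"
    using irr unfolding K_irreducible_def by blast
  have "orbit_annihilator K X B \<noteq> K"
    using proper_cone_matrix_eq_0[OF K, of X] X unfolding orbit_annihilator_def
    by (metis (mono_tags, lifting) matpow.simps(1) matrix_mul_rid mem_Collect_eq)
  then have trivial: "orbit_annihilator K X B = {0}"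
    using irr is_face_orbit_annihilator[OF K X(1) B] orbit_annihilator_invariant[OF B]
    unfolding K_irreducible_def by blast
  obtain x where x: "x \<in> K" "Y *v x \<noteq> 0"
    using proper_cone_matrix_eq_0[OF K, of Y] Y(2) by blast
  then have "Y *v x \<in> K"
    using Y(1) unfolding pi_cone_def by blast
  then obtain j where "(X ** matpow B j) *v (Y *v x) \<noteq> 0"
    using trivial x(2) unfolding orbit_annihilator_def by blast
  then show ?thesis
    by (metis matrix_vector_mul_assoc matrix_vector_mult_0)
qed

lemma K_irreducible_exponent_bound_on_units:
  fixes K :: "(real^'n) set"
  assumes K: "proper_cone K" and irr: "K_irreducible K B"
    and P: "P = pi_cone K \<inter> sphere 0 1"
  obtains J where "\<And>X Y. X \<in> P \<Longrightarrow> Y \<in> P \<Longrightarrow> \<exists>j\<le>J. X ** matpow B j ** Y \<noteq> 0"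
proof -
  define U where "U j = {p :: (real^'n^'n) \<times> (real^'n^'n). fst p ** matpow B j ** snd p \<noteq> 0}" for j
  have "compact (P \<times> P)"
    unfolding P using closed_pi_cone[OF K] by (intro compact_Times closed_Int_compact) auto
  moreover have "open (U j)" for j
    unfolding U_def by (intro open_Collect_neq continuous_intros)
  moreover have "P \<times> P \<subseteq> (\<Union>j. U j)"
    using K_irreducible_product_nonzero[OF K irr] unfolding P U_def by fastforce
  ultimately obtain F where F: "finite F" "P \<times> P \<subseteq> (\<Union>j\<in>F. U j)"
    by (rule compactE_image)
  show ?thesis
  proof
    fix X Y assume "X \<in> P" "Y \<in> P"
    then obtain j where "j \<in> F" "X ** matpow B j ** Y \<noteq> 0"
      using F(2) unfolding U_def by fastforce
    then show "\<exists>j\<le>Max (insert 0 F). X ** matpow B j ** Y \<noteq> 0"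
      using F(1) by (meson Max_ge finite_insert insertI2)
  qed
qed

lemma uniformly_positive_near_compact_slice:
  fixes g :: "'a::metric_space \<times> 'b::topological_space \<Rightarrow> real"
  assumes g: "continuous_on UNIV g" and C: "compact C" and pos: "\<And>p. p \<in> C \<Longrightarrow> 0 < g (x, p)"
  obtains c \<eta> where "0 < c" "0 < \<eta>" "\<And>y p. dist y x < \<eta> \<Longrightarrow> p \<in> C \<Longrightarrow> c < g (y, p)"
proof -
  obtain c where c: "0 < c" "\<And>p. p \<in> C \<Longrightarrow> c < g (x, p)"
  proof (cases "C = {}")
    case False
    have "continuous_on C (\<lambda>p. g (x, p))"
      by (intro continuous_on_compose2[OF g] continuous_intros) auto
    then obtain p0 where "p0 \<in> C" "\<And>p. p \<in> C \<Longrightarrow> g (x, p0) \<le> g (x, p)"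
      using continuous_attains_inf[OF C False] by blast
    then show ?thesis
      using that[of "g (x, p0) / 2"] pos by force
  qed (use that[of 1] in auto)
  define W where "W = {q. c < g q}"
  have "open W"
    unfolding W_def using g by (intro open_Collect_less continuous_intros)
  moreover have "{x} \<times> C \<subseteq> W"
    unfolding W_def using c by fastforce
  ultimately have "\<exists>U. x \<in> U \<and> open U \<and> U \<times> C \<subseteq> W"
    by (rule Elementary_Topology.tube_lemma[OF C])
  then obtain U where U: "x \<in> U" "open U" "U \<times> C \<subseteq> W"
    by blast
  obtain \<eta> where \<eta>: "0 < \<eta>" "ball x \<eta> \<subseteq> U"
    using openE[OF U(2,1)] .
  show ?thesis
  proof (rule that[OF c(1) \<eta>(1)])
    fix y p assume "dist y x < \<eta>" "p \<in> C"
    then have "(y, p) \<in> W"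
      using \<eta>(2) by (intro subsetD[OF U(3)]) (auto simp: dist_commute)
    then show "c < g (y, p)"
      unfolding W_def by simp
  qed
qed

lemma K_irreducible_uniform_bound_on_units:
  fixes K :: "(real^'n) set"
  assumes K: "proper_cone K" and irr: "K_irreducible K B"
    and P: "P = pi_cone K \<inter> sphere 0 1"
  obtains c \<eta> J where "0 < c" "0 < \<eta>"
    "\<And>B' X Y. dist B' B < \<eta> \<Longrightarrow> X \<in> P \<Longrightarrow> Y \<in> P \<Longrightarrow> \<exists>j\<le>J. c \<le> norm (X ** matpow B' j ** Y)"
proof -
  obtain J where J: "\<And>X Y. X \<in> P \<Longrightarrow> Y \<in> P \<Longrightarrow> \<exists>j\<le>J. X ** matpow B j ** Y \<noteq> 0"
    using K_irreducible_exponent_bound_on_units[OF K irr P] by blast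
  define g where "g q = (\<Sum>j\<le>J. norm (fst (snd q) ** matpow (fst q) j ** snd (snd q)))"
    for q :: "(real^'n^'n) \<times> (real^'n^'n) \<times> (real^'n^'n)"
  have g_cont: "continuous_on UNIV g"
    unfolding g_def by (intro continuous_intros)
  have compact: "compact (P \<times> P)"
    unfolding P using closed_pi_cone[OF K] by (intro compact_Times closed_Int_compact) auto
  have g_pos: "0 < g (B, p)" if "p \<in> P \<times> P" for p
  proof -
    have "fst p \<in> P" "snd p \<in> P"
      using that by (auto simp: mem_Times_iff)
    then obtain j where j: "j \<le> J" "fst p ** matpow B j ** snd p \<noteq> 0"
      using J by blast
    then have "0 < norm (fst p ** matpow B j ** snd p)" by simp
    also have "\<dots> \<le> g (B, p)"
      unfolding g_def fst_conv snd_conv using j(1)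
      by (intro member_le_sum[where f = "\<lambda>j. norm (fst p ** matpow B j ** snd p)"]) auto
    finally show ?thesis .
  qed
  obtain c \<eta> where c: "0 < c" and \<eta>: "0 < \<eta>"
    and near: "\<And>B' p. dist B' B < \<eta> \<Longrightarrow> p \<in> P \<times> P \<Longrightarrow> c < g (B', p)"
    by (rule uniformly_positive_near_compact_slice[OF g_cont compact g_pos], assumption) (rule that)
  show ?thesis
  proof (rule that[of "c / (real J + 1)" \<eta>])
    fix B' X Y assume B': "dist B' B < \<eta>" and XY: "X \<in> P" "Y \<in> P"
    show "\<exists>j\<le>J. c / (real J + 1) \<le> norm (X ** matpow B' j ** Y)"
    proof (rule ccontr)
      assume "\<not> ?thesis"
      then have "g (B', X, Y) \<le> real (card {..J}) * (c / (real J + 1))"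
        unfolding g_def by (intro sum_bounded_above) auto
      also have "\<dots> = c"
        by (simp add: field_simps)
      finally show False
        using near[OF B'] XY by fastforce
    qed
  qed (use c \<eta> in auto)
qed

lemma K_irreducible_uniform_product_bound:
  fixes K :: "(real^'n) set"
  assumes K: "proper_cone K" and irr: "K_irreducible K B"
  obtains c \<eta> J where "c > 0" "\<eta> > 0"
    "\<And>B' X Y. dist B' B < \<eta> \<Longrightarrow> X \<in> pi_cone K \<Longrightarrow> Y \<in> pi_cone K \<Longrightarrow>
       \<exists>j\<le>J. c * norm X * norm Y \<le> norm (X ** matpow B' j ** Y)"
proof -
  define P where "P = pi_cone K \<inter> sphere (0::real^'n^'n) 1"
  obtain c \<eta> J where c: "0 < c" and \<eta>: "0 < \<eta>"
    and unit: "\<And>B' X Y. dist B' B < \<eta> \<Longrightarrow> X \<in> P \<Longrightarrow> Y \<in> P \<Longrightarrow> \<exists>j\<le>J. c \<le> norm (X ** matpow B' j ** Y)"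
    by (rule K_irreducible_uniform_bound_on_units[OF K irr P_def]) (rule that)
  show ?thesis
  proof (rule that[OF c \<eta>])
    fix B' X Y assume B': "dist B' B < \<eta>" and X: "X \<in> pi_cone K" and Y: "Y \<in> pi_cone K"
    show "\<exists>j\<le>J. c * norm X * norm Y \<le> norm (X ** matpow B' j ** Y)"
    proof (cases "X = 0 \<or> Y = 0")
      case True then show ?thesis by (intro exI[of _ 0]) auto
    next
      case False
      have "inverse (norm X) *\<^sub>R X \<in> P" "inverse (norm Y) *\<^sub>R Y \<in> P"
        unfolding P_def using False X Y by (auto intro!: pi_cone_scaleR[OF K])
      then obtain j where j: "j \<le> J"
        "c \<le> norm ((inverse (norm X) *\<^sub>R X) ** matpow B' j ** (inverse (norm Y) *\<^sub>R Y))"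
        using unit[OF B'] by blast
      have "norm ((inverse (norm X) *\<^sub>R X) ** matpow B' j ** (inverse (norm Y) *\<^sub>R Y))
          = norm (X ** matpow B' j ** Y) / (norm X * norm Y)"
        by (simp add: matrix_scalar_ac scalar_matrix_assoc[symmetric] divide_inverse mult.commute)
      with j False show ?thesis
        by (intro exI[of _ j]) (simp add: pos_le_divide_eq mult.assoc)
    qed
  qed
qed

section \<open>Exponential growth versus joint spectral radius one\<close>

definition grows_exponentially :: "(real \<Rightarrow> 'a::real_normed_vector set) \<Rightarrow> bool" where
  "grows_exponentially N \<longleftrightarrow> (\<exists>q>1. \<forall>R. \<exists>t\<ge>R. \<exists>Z\<in>N t. q powr t \<le> norm Z)"

locale matrix_semigroup_family =
  fixes N :: "real \<Rightarrow> (real^'n^'n) set"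
  assumes mult_mem: "\<And>s t X Y. X \<in> N s \<Longrightarrow> Y \<in> N t \<Longrightarrow> X ** Y \<in> N (s + t)"
begin

lemma matpow_mem_convex_hull:
  assumes B: "B \<in> convex hull N T"
  shows "1 \<le> j \<Longrightarrow> matpow B j \<in> convex hull N (real j * T)"
proof (induction j rule: nat_induct_at_least)
  case base then show ?case using B by simp
next
  case (Suc j)
  have "{X ** Y | X Y. X \<in> N T \<and> Y \<in> N (real j * T)} \<subseteq> N (real (Suc j) * T)"
    using mult_mem[of _ T _ "real j * T"] by (auto simp: algebra_simps)
  then have "convex hull {X ** Y | X Y. X \<in> N T \<and> Y \<in> N (real j * T)} \<subseteq> convex hull N (real (Suc j) * T)"
    by (rule hull_mono)
  then show ?case
    using convex_hull_matrix_mult[OF B Suc.IH] by auto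
qed

end

locale quasi_irreducible_family = matrix_semigroup_family N for N :: "real \<Rightarrow> (real^'n^'n) set" +
  fixes K :: "(real^'n) set" and T :: real and B :: "real^'n^'n" and c :: real and J :: nat
  assumes positive: "\<And>t X. X \<in> N t \<Longrightarrow> X \<in> pi_cone K"
    and T: "0 \<le> T" and B: "B \<in> convex hull N T" and c: "0 < c"
    and lower_bound: "\<And>X Y. X \<in> pi_cone K \<Longrightarrow> Y \<in> pi_cone K \<Longrightarrow>
        \<exists>j\<le>J. c * norm X * norm Y \<le> norm (X ** matpow B j ** Y)"
begin

lemma exists_product_norm_ge:
  assumes Z: "Z \<in> N t" and X: "X \<in> N a"
  shows "\<exists>j\<le>J. \<exists>W\<in>N (t + real j * T + a). c * norm Z * norm X \<le> norm W"
proof -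
  obtain j where j: "j \<le> J" "c * norm Z * norm X \<le> norm (Z ** matpow B j ** X)"
    using lower_bound[OF positive[OF Z] positive[OF X]] by blast
  show ?thesis
  proof (cases "j = 0")
    case True
    then show ?thesis
      using j mult_mem[OF Z X] by (intro exI[of _ 0] conjI bexI[of _ "Z ** X"]) auto
  next
    case False
    have "linear (\<lambda>P. Z ** P ** X)"
      by (rule linearI) (simp_all add: matrix_add_ldistrib
          bounded_bilinear.add_left[OF bounded_bilinear_matrix_matrix_mult]
          matrix_scalar_ac scalar_matrix_assoc[symmetric])
    moreover have "matpow B j \<in> convex hull N (real j * T)"
      using matpow_mem_convex_hull[OF B] False by simp
    ultimately obtain P where "P \<in> N (real j * T)" "norm (Z ** matpow B j ** X) \<le> norm (Z ** P ** X)"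
      by (rule linear_norm_le_on_convex_hull)
    then show ?thesis
      using j mult_mem[OF mult_mem[OF Z] X]
      by (intro exI[of _ j] conjI bexI[of _ "Z ** P ** X"]) (auto intro: order_trans)
  qed
qed

lemma iterated_product_norm_ge:
  assumes X0: "X0 \<in> N a" and a: "0 \<le> a" and big: "2 \<le> c * norm X0"
  shows "\<exists>t. \<exists>Z\<in>N t. real (Suc k) * a \<le> t \<and> t \<le> real (Suc k) * (a + real J * T)
           \<and> 2 ^ k * norm X0 \<le> norm Z"
proof (induction k)
  case 0 then show ?case using X0 a T by (intro exI[of _ a] bexI[of _ X0]) auto
next
  case (Suc k)
  then obtain t Z where Z: "Z \<in> N t" "real (Suc k) * a \<le> t" "t \<le> real (Suc k) * (a + real J * T)"
     "2 ^ k * norm X0 \<le> norm Z" by blast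
  obtain j W where W: "j \<le> J" "W \<in> N (t + real j * T + a)" "c * norm Z * norm X0 \<le> norm W"
    using exists_product_norm_ge[OF Z(1) X0] by blast
  have "real j * T \<le> real J * T" "0 \<le> real j * T"
    using W(1) T by (simp_all add: mult_right_mono)
  then have "real (Suc (Suc k)) * a \<le> t + real j * T + a"
     "t + real j * T + a \<le> real (Suc (Suc k)) * (a + real J * T)"
    using Z(2,3) by (simp_all add: algebra_simps)
  moreover have "2 ^ Suc k * norm X0 \<le> norm W"
  proof -
    have "2 ^ Suc k * norm X0 \<le> 2 * norm Z" using Z(4) by simp
    also have "\<dots> \<le> norm Z * (c * norm X0)" using big by (simp add: mult_left_mono mult.commute)
    also have "\<dots> \<le> norm W" using W(3) by (simp add: algebra_simps)
    finally show ?thesis .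
  qed
  ultimately show ?case using W(2) by blast
qed

lemma exponential_growth:
  assumes unbounded: "\<And>R. \<exists>a>0. \<exists>X\<in>N a. R \<le> norm X"
  shows "grows_exponentially N"
proof -
  obtain a X0 where a: "0 < a" and X0: "X0 \<in> N a" "max (2 / c) 2 \<le> norm X0"
    using unbounded by blast
  have big: "2 \<le> c * norm X0"
    using X0(2) c by (simp add: field_simps)
  define D where "D = a + real J * T"
  have D: "0 < D" unfolding D_def using a T by (simp add: add_pos_nonneg)
  have "\<exists>t\<ge>R. \<exists>Z\<in>N t. (2 powr (1 / D)) powr t \<le> norm Z" for R
  proof -
    obtain k :: nat where k: "R / a \<le> real k"
      using real_arch_simple by blast
    obtain t Z where Z: "Z \<in> N t" "real (Suc k) * a \<le> t" "t \<le> real (Suc k) * D"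
      "2 ^ k * norm X0 \<le> norm Z"
      using iterated_product_norm_ge[OF X0(1) _ big, of k] a unfolding D_def by auto
    have "R \<le> t"
      using k a Z(2) by (simp add: divide_le_eq algebra_simps)
    moreover have "(2 powr (1 / D)) powr t \<le> norm Z"
    proof -
      have "(2 powr (1 / D)) powr t = 2 powr (t / D)"
        by (simp add: powr_powr)
      also have "\<dots> \<le> 2 powr real (Suc k)"
        using Z(3) D by (intro powr_mono) (auto simp: divide_le_eq mult.commute)
      also have "\<dots> = 2 ^ k * 2"
        using powr_realpow[of 2 "Suc k"] by simp
      also have "\<dots> \<le> 2 ^ k * norm X0"
        using X0(2) by simp
      also have "\<dots> \<le> norm Z"
        using Z(4) .
      finally show ?thesis .
    qed
    ultimately show ?thesis using Z(1) by blast
  qed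
  moreover have "1 < 2 powr (1 / D)" using D by simp
  ultimately show ?thesis unfolding grows_exponentially_def by blast
qed

end

lemma grows_exponentially_if_irreducible_approximable:
  fixes K :: "(real^'n) set" and N :: "real \<Rightarrow> (real^'n^'n) set"
  assumes K: "proper_cone K" and irr: "K_irreducible K A"
    and positive: "\<And>t X. X \<in> N t \<Longrightarrow> X \<in> pi_cone K"
    and mult_mem: "\<And>s t X Y. X \<in> N s \<Longrightarrow> Y \<in> N t \<Longrightarrow> X ** Y \<in> N (s + t)"
    and approx: "\<And>\<eta>. 0 < \<eta> \<Longrightarrow> \<exists>T\<ge>0. \<exists>B\<in>convex hull N T. dist B A < \<eta>"
    and unbounded: "\<And>R. \<exists>a>0. \<exists>X\<in>N a. R \<le> norm X"
  shows "grows_exponentially N"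
proof -
  obtain c \<eta> J where c: "0 < c" and \<eta>: "0 < \<eta>"
    and bound: "\<And>B X Y. dist B A < \<eta> \<Longrightarrow> X \<in> pi_cone K \<Longrightarrow> Y \<in> pi_cone K \<Longrightarrow>
       \<exists>j\<le>J. c * norm X * norm Y \<le> norm (X ** matpow B j ** Y)"
    by (rule K_irreducible_uniform_product_bound[OF K irr]) (rule that)
  obtain T B where T: "0 \<le> T" and B: "B \<in> convex hull N T" and close: "dist B A < \<eta>"
    using approx[OF \<eta>] by blast
  interpret quasi_irreducible_family N K T B c J
  proof
    show "X ** Y \<in> N (s + t)" if "X \<in> N s" "Y \<in> N t" for s t X Y
      using mult_mem that .
    show "\<exists>j\<le>J. c * norm X * norm Y \<le> norm (X ** matpow B j ** Y)"
      if "X \<in> pi_cone K" "Y \<in> pi_cone K" for X Y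
      using bound[OF close that] .
  qed (use positive T B c in auto)
  show ?thesis by (rule exponential_growth[OF unbounded])
qed

lemma powr_root_ge:
  fixes q t s :: real
  assumes "0 < q" "0 < t" "q powr t \<le> s"
  shows "q \<le> s powr (1 / t)"
proof -
  have "q = (q powr t) powr (1 / t)"
    using assms(1,2) by (simp add: powr_powr)
  also have "\<dots> \<le> s powr (1 / t)"
    using assms by (intro powr_mono2) auto
  finally show ?thesis .
qed

lemma not_grows_exponentially_if_jsr_cont_is_1:
  assumes jsr: "jsr_cont_is St 1" and sub: "\<And>t. N t \<subseteq> St t"
  shows "\<not> grows_exponentially N"
proof
  assume "grows_exponentially N"
  then obtain q where q: "1 < q" and grow: "\<And>R. \<exists>t\<ge>R. \<exists>Z\<in>N t. q powr t \<le> norm Z"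
    unfolding grows_exponentially_def by blast
  have "\<forall>\<^sub>F t in at_top. (SUP S\<in>St t. norm S) powr (1 / t) < q \<and> bounded (St t) \<and> 0 < t"
    using jsr q unfolding jsr_cont_is_def
    by (intro eventually_conj order_tendstoD(2) eventually_gt_at_top) auto
  then obtain R where R: "\<And>t. R \<le> t \<Longrightarrow> (SUP S\<in>St t. norm S) powr (1 / t) < q \<and> bounded (St t) \<and> 0 < t"
    unfolding eventually_at_top_linorder by blast
  obtain t Z where t: "R \<le> t" and Z: "Z \<in> N t" "q powr t \<le> norm Z"
    using grow by blast
  have "norm Z \<le> (SUP S\<in>St t. norm S)"
    using R[OF t] sub Z(1) by (intro cSUP_upper) (auto simp: bounded_iff bdd_above_def)
  then have "q \<le> (SUP S\<in>St t. norm S) powr (1 / t)"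
    using q R[OF t] Z(2) by (intro powr_root_ge) auto
  then show False using R[OF t] by simp
qed

lemma not_grows_exponentially_if_jsr_disc_is_1:
  assumes jsr: "jsr_disc_is St 1" and sub: "\<And>t Z. Z \<in> N t \<Longrightarrow> \<exists>k. t = real k \<and> Z \<in> St k"
  shows "\<not> grows_exponentially N"
proof
  assume "grows_exponentially N"
  then obtain q where q: "1 < q" and grow: "\<And>R. \<exists>t\<ge>R. \<exists>Z\<in>N t. q powr t \<le> norm Z"
    unfolding grows_exponentially_def by blast
  have "\<forall>\<^sub>F k in sequentially. (SUP S\<in>St k. norm S) powr (1 / real k) < q \<and> bounded (St k) \<and> 0 < k"
    using jsr q unfolding jsr_disc_is_def
    by (intro eventually_conj order_tendstoD(2) eventually_gt_at_top) auto
  then obtain k0 where k0: "\<And>k. k0 \<le> k \<Longrightarrow> (SUP S\<in>St k. norm S) powr (1 / real k) < q \<and> bounded (St k) \<and> 0 < k"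
    unfolding eventually_sequentially by blast
  obtain t Z where t: "real k0 \<le> t" and Z: "Z \<in> N t" "q powr t \<le> norm Z"
    using grow by blast
  then obtain k where k: "t = real k" "Z \<in> St k" "k0 \<le> k"
    using sub by fastforce
  have "norm Z \<le> (SUP S\<in>St k. norm S)"
    using k0[OF k(3)] k(2) by (intro cSUP_upper) (auto simp: bounded_iff bdd_above_def)
  then have "q \<le> (SUP S\<in>St k. norm S) powr (1 / real k)"
    using q k0[OF k(3)] Z(2) k(1) by (intro powr_root_ge) auto
  then show False using k0[OF k(3)] by simp
qed

lemma unbounded_UN_imp_large_off_zero:
  fixes St :: "'i::zero \<Rightarrow> 'a::real_normed_vector set"
  assumes unbounded: "\<not> bounded (\<Union>t\<in>I. St t)" and bounded0: "bounded (St 0)"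
  shows "\<exists>t\<in>I. t \<noteq> 0 \<and> (\<exists>X\<in>St t. R \<le> norm X)"
proof (rule ccontr)
  assume "\<not> ?thesis"
  then have small: "norm X < R" if "t \<in> I" "t \<noteq> 0" "X \<in> St t" for t X
    using that by (meson not_le)
  obtain b where b: "\<And>X. X \<in> St 0 \<Longrightarrow> norm X \<le> b"
    using bounded0 unfolding bounded_iff by blast
  have "norm X \<le> max R b" if "X \<in> (\<Union>t\<in>I. St t)" for X
    using that small[of _ X] b[of X] by (cases "X \<in> St 0") fastforce+
  then show False
    using unbounded unfolding bounded_iff by blast
qed

section \<open>Discrete semigroups\<close>

lemma disc_sg_mult: "X \<in> disc_sg M s \<Longrightarrow> Y \<in> disc_sg M t \<Longrightarrow> X ** Y \<in> disc_sg M (s + t)"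
proof (induction s arbitrary: X)
  case (Suc s)
  then obtain A X' where X: "X = A ** X'" "A \<in> M" "X' \<in> disc_sg M s" by auto
  then have "A ** (X' ** Y) \<in> disc_sg M (Suc s + t)"
    using Suc.IH[of X'] Suc.prems(2) by auto
  then show ?case
    unfolding X(1) by (simp add: matrix_mul_assoc)
qed simp

lemma disc_sg_bounded:
  fixes K :: "(real^'n) set"
  assumes K: "proper_cone K" and S: "S = (\<Union>t. disc_sg M t)" and positive: "S \<subseteq> pi_cone K"
    and irr: "irred_disc K (disc_sg M)" and jsr: "jsr_disc_is (disc_sg M) 1"
  shows "bounded S"
proof (rule ccontr)
  assume unbounded: "\<not> bounded S"
  define N where "N t = {X. \<exists>k. t = real k \<and> X \<in> disc_sg M k}" for t :: real
  obtain T A where T: "A \<in> convex hull disc_sg M T" and A: "K_irreducible K A"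
    using irr unfolding irred_disc_def by blast
  have "grows_exponentially N"
  proof (rule grows_exponentially_if_irreducible_approximable[OF K A])
    show "X \<in> pi_cone K" if "X \<in> N t" for t X
      using that positive unfolding N_def S by blast
    show "X ** Y \<in> N (s + t)" if "X \<in> N s" "Y \<in> N t" for s t X Y
      using that disc_sg_mult unfolding N_def by (fastforce intro: exI[of _ "_ + _"])
    have "N (real T) = disc_sg M T"
      unfolding N_def by auto
    then show "\<exists>T\<ge>0. \<exists>B\<in>convex hull N T. dist B A < \<eta>" if "0 < \<eta>" for \<eta>
      using T that by (metis dist_self of_nat_0_le_iff)
    show "\<exists>a>0. \<exists>X\<in>N a. R \<le> norm X" for R
    proof -
      have "\<exists>k\<in>UNIV. k \<noteq> 0 \<and> (\<exists>X\<in>disc_sg M k. R \<le> norm X)"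
        using unbounded unfolding S by (intro unbounded_UN_imp_large_off_zero) auto
      then obtain k X where "k \<noteq> 0" "X \<in> disc_sg M k" "R \<le> norm X"
        by blast
      then show ?thesis
        unfolding N_def by (intro exI[of _ "real k"] conjI bexI[of _ X]) auto
    qed
  qed
  moreover have "\<exists>k. t = real k \<and> Z \<in> disc_sg M k" if "Z \<in> N t" for t Z
    using that unfolding N_def by blast
  ultimately show False
    using not_grows_exponentially_if_jsr_disc_is_1[OF jsr] by blast
qed

section \<open>Continuous semigroups\<close>

definition cont_trajectory ::
    "(real^'n^'n) set \<Rightarrow> real \<Rightarrow> (real \<Rightarrow> real^'n^'n) \<Rightarrow> (real \<Rightarrow> real^'n^'n) \<Rightarrow> bool" where
  "cont_trajectory M t \<sigma> \<Phi> \<longleftrightarrow>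
     \<sigma> \<in> borel_measurable (lebesgue_on {0..t}) \<and> (\<forall>s\<in>{0..t}. \<sigma> s \<in> M) \<and>
     continuous_on {0..t} \<Phi> \<and>
     (\<forall>s\<in>{0..t}. ((\<lambda>r. \<sigma> r ** \<Phi> r) has_integral (\<Phi> s - mat 1)) {0..s})"

lemma cont_sg_eq: "cont_sg M t = {\<Phi> t | \<sigma> \<Phi>. cont_trajectory M t \<sigma> \<Phi>}"
  unfolding cont_sg_def cont_trajectory_def by blast

lemma cont_trajectory_at_0:
  assumes "cont_trajectory M t \<sigma> \<Phi>" and "0 \<le> t"
  shows "\<Phi> 0 = mat 1"
proof -
  have integral: "\<forall>s\<in>{0..t}. ((\<lambda>r. \<sigma> r ** \<Phi> r) has_integral (\<Phi> s - mat 1)) {0..s}"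
    using assms(1) unfolding cont_trajectory_def by blast
  have "((\<lambda>r. \<sigma> r ** \<Phi> r) has_integral (\<Phi> 0 - mat 1)) {0}"
    using bspec[OF integral, of 0] assms(2) by simp
  then have "\<Phi> 0 - mat 1 = 0"
    using has_integral_unique has_integral_refl(2) by blast
  then show ?thesis by simp
qed

lemma cont_sg_0: "cont_sg M 0 \<subseteq> {mat 1}"
  unfolding cont_sg_eq using cont_trajectory_at_0 by fastforce

lemma borel_measurable_lebesgue_shift:
  fixes g :: "real \<Rightarrow> 'b::euclidean_space"
  assumes g: "g \<in> borel_measurable lebesgue"
  shows "(\<lambda>x. g (x - a)) \<in> borel_measurable lebesgue"
proof (rule measurableI)
  fix B :: "'b set" assume "B \<in> sets borel"
  then have "(\<lambda>x. a + x) ` (g -` B \<inter> space lebesgue) \<in> sets lebesgue"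
    by (intro lebesgue_sets_translation measurable_sets[OF g])
  moreover have "(\<lambda>x. g (x - a)) -` B \<inter> space lebesgue = (\<lambda>x. a + x) ` (g -` B \<inter> space lebesgue)"
    by (force simp: image_iff intro: bexI[of _ "_ - a"])
  ultimately show "(\<lambda>x. g (x - a)) -` B \<inter> space lebesgue \<in> sets lebesgue" by simp
qed simp

lemma borel_measurable_concat:
  fixes f g :: "real \<Rightarrow> 'b::euclidean_space"
  assumes s: "0 \<le> s" and t: "0 \<le> t"
    and f: "f \<in> borel_measurable (lebesgue_on {0..s})" and g: "g \<in> borel_measurable (lebesgue_on {0..t})"
  shows "(\<lambda>r. if r \<le> s then f r else g (r - s)) \<in> borel_measurable (lebesgue_on {0..s + t})"
proof (rule borel_measurable_if_D)
  have "(\<lambda>x. if x \<in> {0..s} then f x else 0) \<in> borel_measurable lebesgue"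
    by (rule borel_measurable_if_I[OF f]) simp
  moreover have "g \<in> borel_measurable (lebesgue_on {0<..t})"
    by (rule measurable_restrict_mono[OF g]) auto
  then have "(\<lambda>y. if y \<in> {0<..t} then g y else 0) \<in> borel_measurable lebesgue"
    by (rule borel_measurable_if_I) simp
  then have "(\<lambda>x. if x - s \<in> {0<..t} then g (x - s) else 0) \<in> borel_measurable lebesgue"
    by (rule borel_measurable_lebesgue_shift)
  ultimately have "(\<lambda>x. (if x \<in> {0..s} then f x else 0) + (if x - s \<in> {0<..t} then g (x - s) else 0))
      \<in> borel_measurable lebesgue"
    by (rule borel_measurable_add)
  moreover have "(\<lambda>x. (if x \<in> {0..s} then f x else 0) + (if x - s \<in> {0<..t} then g (x - s) else 0))
      = (\<lambda>x. if x \<in> {0..s + t} then (if x \<le> s then f x else g (x - s)) else 0)"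
    using s t by (auto simp: fun_eq_iff)
  ultimately show "(\<lambda>x. if x \<in> {0..s + t} then (if x \<le> s then f x else g (x - s)) else 0)
      \<in> borel_measurable lebesgue"
    by simp
qed

lemma has_integral_concat_trajectory:
  fixes \<sigma>1 \<sigma>2 \<Phi>1 \<Phi>2 :: "real \<Rightarrow> real^'n^'n" and s t r :: real
  defines "\<sigma> \<equiv> \<lambda>r. if r \<le> s then \<sigma>1 r else \<sigma>2 (r - s)"
    and "\<Phi> \<equiv> \<lambda>r. if r \<le> s then \<Phi>1 r else \<Phi>2 (r - s) ** \<Phi>1 s"
  assumes s: "0 \<le> s" and r: "r \<in> {0..s + t}"
    and int1: "\<forall>r\<in>{0..s}. ((\<lambda>u. \<sigma>1 u ** \<Phi>1 u) has_integral (\<Phi>1 r - mat 1)) {0..r}"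
    and int2: "\<forall>r\<in>{0..t}. ((\<lambda>u. \<sigma>2 u ** \<Phi>2 u) has_integral (\<Phi>2 r - mat 1)) {0..r}"
  shows "((\<lambda>u. \<sigma> u ** \<Phi> u) has_integral (\<Phi> r - mat 1)) {0..r}"
proof -
  have initial: "((\<lambda>u. \<sigma> u ** \<Phi> u) has_integral (\<Phi>1 r' - mat 1)) {0..r'}" if "r' \<in> {0..s}" for r'
  proof -
    have "((\<lambda>u. \<sigma>1 u ** \<Phi>1 u) has_integral (\<Phi>1 r' - mat 1)) {0..r'}"
      using int1 that by blast
    moreover have "\<sigma>1 u ** \<Phi>1 u = \<sigma> u ** \<Phi> u" if "u \<in> {0..r'}" for u
      using that \<open>r' \<in> {0..s}\<close> unfolding \<sigma>_def \<Phi>_def by auto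
    ultimately show ?thesis
      by (rule has_integral_eq[rotated])
  qed
  show ?thesis
  proof (cases "r \<le> s")
    case True
    then show ?thesis using initial r unfolding \<Phi>_def by simp
  next
    case False
    note bilinear = bounded_bilinear_matrix_matrix_mult
    have "((\<lambda>u. \<sigma>2 u ** \<Phi>2 u) has_integral (\<Phi>2 (r - s) - mat 1)) {0..r - s}"
      using int2 r False by simp
    then have "((\<lambda>u. (\<sigma>2 u ** \<Phi>2 u) ** \<Phi>1 s) has_integral ((\<Phi>2 (r - s) - mat 1) ** \<Phi>1 s)) {0..r - s}"
      using has_integral_linear[OF _ bounded_bilinear.bounded_linear_left[OF bilinear]]
      by (simp add: o_def)
    then have "((\<lambda>u. (\<sigma>2 (u - s) ** \<Phi>2 (u - s)) ** \<Phi>1 s) has_integral ((\<Phi>2 (r - s) - mat 1) ** \<Phi>1 s)) {s..r}"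
      using has_integral_shift_real_ivl[of _ _ 0 "r - s" "- s"] by simp
    then have "((\<lambda>u. \<sigma> u ** \<Phi> u) has_integral ((\<Phi>2 (r - s) - mat 1) ** \<Phi>1 s)) {s..r}"
      by (rule has_integral_spike_finite[of "{s}", rotated 2])
        (auto simp: \<sigma>_def \<Phi>_def matrix_mul_assoc)
    then have "((\<lambda>u. \<sigma> u ** \<Phi> u) has_integral (\<Phi>1 s - mat 1) + (\<Phi>2 (r - s) - mat 1) ** \<Phi>1 s) {0..r}"
      using False s by (intro has_integral_combine[OF s _ initial]) auto
    moreover have "(\<Phi>1 s - mat 1) + (\<Phi>2 (r - s) - mat 1) ** \<Phi>1 s = \<Phi> r - mat 1"
      using False unfolding \<Phi>_def by (simp add: bounded_bilinear.diff_left[OF bilinear])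
    ultimately show ?thesis by simp
  qed
qed

lemma cont_trajectory_concat:
  fixes \<sigma>1 \<sigma>2 \<Phi>1 \<Phi>2 :: "real \<Rightarrow> real^'n^'n" and s t :: real
  defines "\<sigma> \<equiv> \<lambda>r. if r \<le> s then \<sigma>1 r else \<sigma>2 (r - s)"
    and "\<Phi> \<equiv> \<lambda>r. if r \<le> s then \<Phi>1 r else \<Phi>2 (r - s) ** \<Phi>1 s"
  assumes s: "0 \<le> s" and t: "0 \<le> t"
    and traj1: "cont_trajectory M s \<sigma>1 \<Phi>1" and traj2: "cont_trajectory M t \<sigma>2 \<Phi>2"
  shows "cont_trajectory M (s + t) \<sigma> \<Phi>"
proof -
  have init2: "\<Phi>2 0 = mat 1"
    by (rule cont_trajectory_at_0[OF traj2 t])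
  have "continuous_on {0..s + t} \<Phi>"
    unfolding \<Phi>_def
  proof (rule continuous_on_cases_le)
    have "continuous_on {0..s} \<Phi>1"
      using traj1 unfolding cont_trajectory_def by blast
    then show "continuous_on {r \<in> {0..s + t}. r \<le> s} \<Phi>1"
      by (rule continuous_on_subset) auto
    have "continuous_on {0..t} \<Phi>2"
      using traj2 unfolding cont_trajectory_def by blast
    then have "continuous_on {r \<in> {0..s + t}. s \<le> r} (\<lambda>r. \<Phi>2 (r - s))"
      by (rule continuous_on_compose2) (auto intro!: continuous_intros)
    then show "continuous_on {r \<in> {0..s + t}. s \<le> r} (\<lambda>r. \<Phi>2 (r - s) ** \<Phi>1 s)"
      by (intro continuous_intros)
    show "continuous_on {0..s + t} (\<lambda>r. r)"
      by (rule continuous_on_id)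
    show "\<Phi>1 r = \<Phi>2 (r - s) ** \<Phi>1 s" if "r = s" for r
      using init2 that by simp
  qed
  moreover have "\<sigma> \<in> borel_measurable (lebesgue_on {0..s + t})"
    using traj1 traj2 unfolding cont_trajectory_def \<sigma>_def by (intro borel_measurable_concat s t) auto
  moreover have "\<sigma> r \<in> M" if "r \<in> {0..s + t}" for r
    using traj1 traj2 that unfolding cont_trajectory_def \<sigma>_def by auto
  moreover have "((\<lambda>u. \<sigma> u ** \<Phi> u) has_integral (\<Phi> r - mat 1)) {0..r}" if "r \<in> {0..s + t}" for r
    unfolding \<sigma>_def \<Phi>_def
    by (rule has_integral_concat_trajectory[OF s that])
      (use traj1 traj2 in \<open>simp_all add: cont_trajectory_def\<close>)
  ultimately show ?thesis
    unfolding cont_trajectory_def by blast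
qed

lemma cont_sg_mult:
  assumes s: "0 \<le> s" and t: "0 \<le> t" and X: "X \<in> cont_sg M s" and Y: "Y \<in> cont_sg M t"
  shows "Y ** X \<in> cont_sg M (s + t)"
proof -
  obtain \<sigma>1 \<Phi>1 where X: "X = \<Phi>1 s" and traj1: "cont_trajectory M s \<sigma>1 \<Phi>1"
    using X unfolding cont_sg_eq by blast
  obtain \<sigma>2 \<Phi>2 where Y: "Y = \<Phi>2 t" and traj2: "cont_trajectory M t \<sigma>2 \<Phi>2"
    using Y unfolding cont_sg_eq by blast
  define \<sigma> where "\<sigma> r = (if r \<le> s then \<sigma>1 r else \<sigma>2 (r - s))" for r
  define \<Phi> where "\<Phi> r = (if r \<le> s then \<Phi>1 r else \<Phi>2 (r - s) ** \<Phi>1 s)" for r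
  have "Y ** X = \<Phi> (s + t)"
  proof (cases "t = 0")
    case True
    then show ?thesis using cont_trajectory_at_0[OF traj2 t] X Y unfolding \<Phi>_def by simp
  next
    case False
    then show ?thesis using X Y t unfolding \<Phi>_def by simp
  qed
  moreover have "cont_trajectory M (s + t) \<sigma> \<Phi>"
    unfolding \<sigma>_def[abs_def] \<Phi>_def[abs_def] by (rule cont_trajectory_concat[OF s t traj1 traj2])
  ultimately show ?thesis
    unfolding cont_sg_eq by blast
qed

lemma cont_sg_bounded:
  fixes K :: "(real^'n) set"
  assumes K: "proper_cone K" and S: "S = (\<Union>t\<in>{0..}. cont_sg M t)" and positive: "S \<subseteq> pi_cone K"
    and irr: "irred_cont K (cont_sg M)" and jsr: "jsr_cont_is (cont_sg M) 1"
  shows "bounded S"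
proof (rule ccontr)
  assume unbounded: "\<not> bounded S"
  define N where "N t = (if 0 \<le> t then cont_sg M t else {})" for t :: real
  obtain T A where T: "0 < T" "A \<in> convex hull cont_sg M T" and A: "K_irreducible K A"
    using irr unfolding irred_cont_def by blast
  have "grows_exponentially N"
  proof (rule grows_exponentially_if_irreducible_approximable[OF K A])
    show "X \<in> pi_cone K" if "X \<in> N t" for t X
      using that positive unfolding N_def S by (auto split: if_splits)
    show "X ** Y \<in> N (s + t)" if "X \<in> N s" "Y \<in> N t" for s t X Y
      using that cont_sg_mult[of t s Y M X] unfolding N_def by (auto split: if_splits simp: add.commute)
    have "N T = cont_sg M T"
      using T(1) unfolding N_def by simp
    then show "\<exists>T\<ge>0. \<exists>B\<in>convex hull N T. dist B A < \<eta>" if "0 < \<eta>" for \<eta>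
      using T that by (intro exI[of _ T] conjI bexI[of _ A]) auto
    show "\<exists>a>0. \<exists>X\<in>N a. R \<le> norm X" for R
    proof -
      have "bounded (cont_sg M 0)"
        by (rule bounded_subset[OF _ cont_sg_0]) simp
      then have "\<exists>t\<in>{0..}. t \<noteq> 0 \<and> (\<exists>X\<in>cont_sg M t. R \<le> norm X)"
        using unbounded unfolding S by (intro unbounded_UN_imp_large_off_zero)
      then obtain t X where "0 \<le> t" "t \<noteq> 0" "X \<in> cont_sg M t" "R \<le> norm X"
        by blast
      then show ?thesis
        unfolding N_def by (intro exI[of _ t] conjI bexI[of _ X]) auto
    qed
  qed
  moreover have "N t \<subseteq> cont_sg M t" for t
    unfolding N_def by simp
  ultimately show False
    using not_grows_exponentially_if_jsr_cont_is_1[OF jsr] by blast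
qed

section \<open>Switched semigroups with jumps\<close>

lemma mexp_0: "mexp (0::real^'n^'n) = mat 1"
proof -
  have "mexp (0::real^'n^'n) = (\<Sum>k\<in>{0}. (1 / fact k) *\<^sub>R matpow (0::real^'n^'n) k)"
    unfolding mexp_def
  proof (rule suminf_finite)
    show "(1 / fact k) *\<^sub>R matpow (0::real^'n^'n) k = 0" if "k \<notin> {0}" for k
      using that by (cases k) auto
  qed simp
  then show ?thesis by simp
qed

lemma continuous_on_mexp_scaleR: "continuous_on UNIV (\<lambda>r. mexp (r *\<^sub>R (A::real^'n^'n)))"
proof -
  define f where "f k r = (r ^ k / fact k) *\<^sub>R matpow A k" for k r
  have mexp_eq: "mexp (r *\<^sub>R A) = (\<Sum>k. f k r)" for r
    unfolding mexp_def f_def matpow_scaleR by (simp add: divide_inverse mult.commute)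
  have interval: "continuous_on {-R..R} (\<lambda>r. \<Sum>k. f k r)" for R
  proof -
    define bound where "bound k = norm (mat 1 :: real^'n^'n) * ((\<bar>R\<bar> * norm A) ^ k / fact k)" for k
    have "norm (f k r) \<le> bound k" if "r \<in> {-R..R}" for k r
    proof -
      have "\<bar>r\<bar> ^ k \<le> \<bar>R\<bar> ^ k"
        using that by (intro power_mono) auto
      then have "norm (f k r) \<le> (\<bar>R\<bar> ^ k / fact k) * (norm (mat 1 :: real^'n^'n) * norm A ^ k)"
        unfolding f_def using norm_matpow_le[of A k]
        by (auto simp: power_abs intro!: mult_mono divide_right_mono)
      then show ?thesis unfolding bound_def by (simp add: power_mult_distrib mult_ac)
    qed
    moreover have "summable bound"
      unfolding bound_def using summable_exp[of "\<bar>R\<bar> * norm A"]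
      by (intro summable_mult) (simp add: divide_inverse mult.commute)
    ultimately have "uniform_limit {-R..R} (\<lambda>n r. \<Sum>k<n. f k r) (\<lambda>r. \<Sum>k. f k r) sequentially"
      by (intro Weierstrass_m_test) auto
    then show ?thesis
      by (rule uniform_limit_theorem[rotated]) (auto simp: f_def intro!: always_eventually continuous_intros)
  qed
  have "isCont (\<lambda>r. \<Sum>k. f k r) r" for r
    by (rule continuous_on_interior[OF interval[of "\<bar>r\<bar> + 1"]]) auto
  then show ?thesis
    unfolding mexp_eq by (intro continuous_at_imp_continuous_on) auto
qed

lemma jump_prod_Cons:
  "jump_prod ((A, P) # ms) (t0 # ts) t =
     jump_prod ms ts t ** (mexp (((case ts of [] \<Rightarrow> t | s # _ \<Rightarrow> s) - t0) *\<^sub>R A) ** P)"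
  by (simp add: Let_def)

lemma jump_prod_Nil2: "jump_prod ms [] t = mat 1"
  by (cases ms) auto

lemma jump_prod_append:
  assumes "length ms1 = length ts1" and "ts2 \<noteq> []"
  shows "jump_prod (ms1 @ ms2) (ts1 @ ts2) t = jump_prod ms2 ts2 t ** jump_prod ms1 ts1 (hd ts2)"
  using assms
proof (induction ms1 ts1 rule: list_induct2)
  case (Cons m ms1 t0 ts1)
  obtain A P where m: "m = (A, P)" by (cases m)
  have next_time: "(case ts1 @ ts2 of [] \<Rightarrow> t | s # _ \<Rightarrow> s) = (case ts1 of [] \<Rightarrow> hd ts2 | s # _ \<Rightarrow> s)"
    using Cons.prems by (cases ts1; cases ts2) auto
  show ?case
    unfolding m append_Cons jump_prod_Cons next_time Cons.IH[OF Cons.prems]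
    by (simp add: matrix_mul_assoc)
qed simp

lemma jump_prod_shift:
  "length ms = length ts \<Longrightarrow> jump_prod ms (map (\<lambda>x. x + c) ts) (t + c) = jump_prod ms ts t"
proof (induction ms ts rule: list_induct2)
  case (Cons m ms t0 ts)
  obtain A P where m: "m = (A, P)" by (cases m)
  have next_time: "(case map (\<lambda>x. x + c) ts of [] \<Rightarrow> t + c | s # _ \<Rightarrow> s) - (t0 + c)
      = (case ts of [] \<Rightarrow> t | s # _ \<Rightarrow> s) - t0"
    by (cases ts) auto
  show ?case
    unfolding m list.map(2) jump_prod_Cons next_time Cons.IH ..
qed simp

lemma continuous_on_jump_prod: "continuous_on UNIV (\<lambda>t. jump_prod ms ts t)"
proof (induction ms arbitrary: ts)
  case (Cons m ms)
  obtain A P where m: "m = (A, P)" by (cases m)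
  show ?case
  proof (cases ts)
    case (Cons t0 ts')
    have "continuous_on UNIV (\<lambda>t. mexp ((t - t0) *\<^sub>R A))"
      by (rule continuous_on_compose2[OF continuous_on_mexp_scaleR]) (auto intro!: continuous_intros)
    then show ?thesis
      unfolding m Cons jump_prod_Cons using Cons.IH
      by (cases ts') (auto simp: jump_prod_Nil2 intro!: continuous_intros)
  qed (simp add: jump_prod_Nil2)
qed simp

lemma sorted_wrt_less_hd_le: "sorted_wrt (<) xs \<Longrightarrow> x \<in> set xs \<Longrightarrow> hd xs \<le> (x::'a::linorder)"
  by (cases xs) auto

lemma sorted_wrt_less_le_last: "sorted_wrt (<) xs \<Longrightarrow> x \<in> set xs \<Longrightarrow> x \<le> last (xs::'a::linorder list)"
  by (induction xs rule: rev_induct) (auto simp: sorted_wrt_append)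

text \<open>Unlike \<open>jump_sg\<close>, these sets are closed under concatenation: gluing two switching
  sequences keeps the switching times strictly increasing.\<close>
definition jump_sg_strict :: "((real^'n^'n) \<times> (real^'n^'n)) set \<Rightarrow> real \<Rightarrow> (real^'n^'n) set" where
  "jump_sg_strict M t = {jump_prod ms ts t | ms ts. ms \<noteq> [] \<and> length ts = length ms \<and> set ms \<subseteq> M \<and>
      hd ts = 0 \<and> sorted_wrt (<) ts \<and> last ts < t}"

lemma jump_sg_strict_subset: "jump_sg_strict M t \<subseteq> jump_sg M t"
  unfolding jump_sg_strict_def jump_sg_def by force

lemma jump_sg_strict_pos:
  assumes "X \<in> jump_sg_strict M t" shows "0 < t"
proof -
  obtain ms ts where ts: "ms \<noteq> []" "length ts = length ms" "set ms \<subseteq> M" "hd ts = 0"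
      "sorted_wrt (<) ts" "last ts < t"
    using assms unfolding jump_sg_strict_def by blast
  then have "ts \<noteq> []" by auto
  then have "hd ts \<le> last ts"
    by (intro sorted_wrt_less_le_last[OF ts(5)]) simp
  then show ?thesis using ts(4,6) by simp
qed

lemma jump_sg_strict_mult:
  assumes X: "X \<in> jump_sg_strict M s" and Y: "Y \<in> jump_sg_strict M t"
  shows "Y ** X \<in> jump_sg_strict M (s + t)"
proof -
  obtain ms1 ts1 where X: "X = jump_prod ms1 ts1 s" "ms1 \<noteq> []" "length ts1 = length ms1"
      "set ms1 \<subseteq> M" "hd ts1 = 0" "sorted_wrt (<) ts1" "last ts1 < s"
    using X unfolding jump_sg_strict_def by blast
  obtain ms2 ts2 where Y: "Y = jump_prod ms2 ts2 t" "ms2 \<noteq> []" "length ts2 = length ms2"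
      "set ms2 \<subseteq> M" "hd ts2 = 0" "sorted_wrt (<) ts2" "last ts2 < t"
    using Y unfolding jump_sg_strict_def by blast
  define ts2' where "ts2' = map (\<lambda>x. x + s) ts2"
  have ne: "ts1 \<noteq> []" "ts2 \<noteq> []"
    using X(2,3) Y(2,3) by auto
  have "jump_prod (ms1 @ ms2) (ts1 @ ts2') (s + t) = jump_prod ms2 ts2' (t + s) ** jump_prod ms1 ts1 s"
    using jump_prod_append[OF X(3)[symmetric], of ts2' ms2 "s + t"] ne Y(5)
    unfolding ts2'_def by (cases ts2) (auto simp: add.commute)
  also have "\<dots> = Y ** X"
    unfolding ts2'_def jump_prod_shift[OF Y(3)[symmetric]] X(1) Y(1) ..
  finally have product: "jump_prod (ms1 @ ms2) (ts1 @ ts2') (s + t) = Y ** X" .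
  have "x < y" if x: "x \<in> set ts1" and y: "y \<in> set ts2'" for x y
  proof -
    obtain z where "z \<in> set ts2" "y = z + s"
      using y unfolding ts2'_def by auto
    then show ?thesis
      using sorted_wrt_less_le_last[OF X(6) x] sorted_wrt_less_hd_le[OF Y(6)] X(7) Y(5)
      by fastforce
  qed
  moreover have "sorted_wrt (<) ts2'"
    unfolding ts2'_def sorted_wrt_map using Y(6) by (simp add: sorted_wrt_mono_rel[of _ "(<)"])
  ultimately have "sorted_wrt (<) (ts1 @ ts2')"
    using X(6) by (simp add: sorted_wrt_append)
  moreover have "last (ts1 @ ts2') < s + t"
    using ne Y(7) unfolding ts2'_def by (simp add: last_map)
  ultimately have "jump_prod (ms1 @ ms2) (ts1 @ ts2') (s + t) \<in> jump_sg_strict M (s + t)"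
    unfolding jump_sg_strict_def using X Y ne by (fastforce simp: ts2'_def)
  then show ?thesis
    unfolding product .
qed

text \<open>A switched product whose last switch happens exactly at the final time ends with a bare
  projection, since the last exponential factor is \<open>mexp 0\<close>.\<close>
lemma jump_sg_cases:
  assumes "X \<in> jump_sg M t"
  shows "X \<in> jump_sg_strict M t \<or>
    (\<exists>A P Z. (A, P) \<in> M \<and> (Z = mat 1 \<or> Z \<in> jump_sg_strict M t) \<and> X = P ** Z)"
proof -
  obtain ms ts where X: "X = jump_prod ms ts t" and ms: "ms \<noteq> []" "length ts = length ms" "set ms \<subseteq> M"
      and ts: "hd ts = 0" "sorted_wrt (<) ts" "last ts \<le> t"
    using assms unfolding jump_sg_def by blast
  show ?thesis
  proof (cases "last ts < t")
    case True
    then show ?thesis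
      unfolding X jump_sg_strict_def using ms ts by blast
  next
    case False
    obtain ms' A P where ms': "ms = ms' @ [(A, P)]"
      using ms(1) by (metis prod.exhaust rev_exhaust)
    have "ts \<noteq> []" using ms(1,2) by auto
    then obtain ts' where ts': "ts = ts' @ [t]"
      using False ts(3) by (metis append_butlast_last_id antisym_conv1)
    have length': "length ts' = length ms'"
      using ms(2) unfolding ms' ts' by simp
    define Z where "Z = jump_prod ms' ts' t"
    have "X = jump_prod [(A, P)] [t] t ** jump_prod ms' ts' (hd [t])"
      unfolding X ms' ts' by (rule jump_prod_append[OF length'[symmetric]]) simp
    then have XZ: "X = P ** Z"
      unfolding Z_def by (simp add: jump_prod_Cons mexp_0)
    have "Z = mat 1 \<or> Z \<in> jump_sg_strict M t"
    proof (cases "ms' = []")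
      case True
      then show ?thesis using length' unfolding Z_def by simp
    next
      case False
      then have "ts' \<noteq> []" using length' by auto
      moreover have "sorted_wrt (<) ts'" "\<forall>x\<in>set ts'. x < t"
        using ts(2) unfolding ts' by (simp_all add: sorted_wrt_append)
      ultimately have "hd ts' = 0" "last ts' < t"
        using ts(1) unfolding ts' by simp_all
      then have "Z \<in> jump_sg_strict M t"
        unfolding Z_def jump_sg_strict_def
        using False length' ms(3) \<open>sorted_wrt (<) ts'\<close> unfolding ms' by auto
      then show ?thesis ..
    qed
    moreover have "(A, P) \<in> M"
      using ms(3) unfolding ms' by simp
    ultimately show ?thesis
      using XZ by blast
  qed
qed

lemma jump_sg_approx_by_strict:
  assumes A: "A \<in> convex hull (jump_sg M T)" and \<eta>: "0 < \<eta>"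
  shows "\<exists>e>0. \<exists>B\<in>convex hull (jump_sg_strict M (T + e)). dist B A < \<eta>"
proof -
  obtain S u where S: "finite S" "S \<subseteq> jump_sg M T" "\<forall>x\<in>S. 0 \<le> u x" "sum u S = 1"
    and A_eq: "(\<Sum>v\<in>S. u v *\<^sub>R v) = A"
    using A unfolding convex_hull_explicit by blast
  have "\<forall>v\<in>S. \<exists>p. v = jump_prod (fst p) (snd p) T \<and> fst p \<noteq> [] \<and> length (snd p) = length (fst p)
      \<and> set (fst p) \<subseteq> M \<and> hd (snd p) = 0 \<and> sorted_wrt (<) (snd p) \<and> last (snd p) \<le> T"
    using S(2) unfolding jump_sg_def by fastforce
  then obtain p where p: "\<And>v. v \<in> S \<Longrightarrow> v = jump_prod (fst (p v)) (snd (p v)) T \<and> fst (p v) \<noteq> []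
      \<and> length (snd (p v)) = length (fst (p v)) \<and> set (fst (p v)) \<subseteq> M \<and> hd (snd (p v)) = 0
      \<and> sorted_wrt (<) (snd (p v)) \<and> last (snd (p v)) \<le> T"
    by metis
  define g where "g v e = jump_prod (fst (p v)) (snd (p v)) (T + e)" for v e
  have g_strict: "g v e \<in> jump_sg_strict M (T + e)" if "v \<in> S" "0 < e" for v e
    using p[OF that(1)] that(2) unfolding g_def jump_sg_strict_def by fastforce
  have "((\<lambda>e. g v e) \<longlongrightarrow> g v 0) (at_right 0)" for v
    unfolding g_def using continuous_on_jump_prod
    by (intro isCont_tendsto_compose[of _ "\<lambda>t. jump_prod _ _ t"] tendsto_intros)
      (auto simp: continuous_on_eq_continuous_at)
  then have "((\<lambda>e. \<Sum>v\<in>S. u v *\<^sub>R g v e) \<longlongrightarrow> (\<Sum>v\<in>S. u v *\<^sub>R g v 0)) (at_right 0)"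
    by (intro tendsto_sum tendsto_scaleR tendsto_const)
  moreover have "(\<Sum>v\<in>S. u v *\<^sub>R g v 0) = A"
    using A_eq p unfolding g_def by (auto intro!: sum.cong)
  ultimately have "\<forall>\<^sub>F e in at_right 0. dist (\<Sum>v\<in>S. u v *\<^sub>R g v e) A < \<eta> \<and> 0 < e"
    using \<eta> by (auto intro!: eventually_conj tendstoD eventually_at_right_less)
  then obtain e where e: "dist (\<Sum>v\<in>S. u v *\<^sub>R g v e) A < \<eta>" "0 < e"
    using eventually_happens' trivial_limit_at_right_real by blast
  have "(\<Sum>v\<in>S. u v *\<^sub>R g v e) \<in> convex hull (jump_sg_strict M (T + e))"
    using S(1,3,4) g_strict e(2) by (intro convex_sum convex_convex_hull) (auto intro: hull_inc)
  then show ?thesis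
    using e by blast
qed

lemma bounded_jump_sg_if_bounded_strict:
  fixes M :: "((real^'n^'n) \<times> (real^'n^'n)) set"
  assumes M: "jump_modes M" and small: "\<And>t Z. Z \<in> jump_sg_strict M t \<Longrightarrow> norm Z \<le> R"
  shows "bounded (\<Union>t. jump_sg M t)"
proof -
  obtain b where b: "\<And>x. x \<in> M \<Longrightarrow> norm x \<le> b"
    using M unfolding jump_modes_def by (meson bounded_iff compact_imp_bounded)
  have "norm X \<le> max R (b * max R (norm (mat 1 :: real^'n^'n)))" if X: "X \<in> jump_sg M t" for t X
  proof -
    consider "X \<in> jump_sg_strict M t"
      | A P Z where "(A, P) \<in> M" "Z = mat 1 \<or> Z \<in> jump_sg_strict M t" "X = P ** Z"
      using jump_sg_cases[OF X] by blast
    then show ?thesis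
    proof cases
      case 1
      then show ?thesis using small by (auto intro: max.coboundedI1)
    next
      case (2 A P Z)
      have "norm P \<le> b"
        using b[OF 2(1)] norm_snd_le[of P A] by simp
      moreover have "norm Z \<le> max R (norm (mat 1 :: real^'n^'n))"
        using 2(2) small by (auto intro: max.coboundedI1)
      ultimately have "norm P * norm Z \<le> b * max R (norm (mat 1 :: real^'n^'n))"
        by (intro mult_mono) (auto intro: order_trans[OF norm_ge_zero])
      then show ?thesis
        using norm_matrix_mult_le[of P Z] 2(3) by simp
    qed
  qed
  then show ?thesis
    unfolding bounded_iff by blast
qed

lemma jump_sg_bounded:
  fixes K :: "(real^'n) set"
  assumes K: "proper_cone K" and M: "jump_modes M" and S: "S = (\<Union>t\<in>{0..}. jump_sg M t)"
    and positive: "S \<subseteq> pi_cone K"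
    and irr: "irred_cont K (jump_sg M)" and jsr: "jsr_cont_is (jump_sg M) 1"
  shows "bounded S"
proof (rule ccontr)
  assume unbounded: "\<not> bounded S"
  obtain T A where A_hull: "A \<in> convex hull jump_sg M T" and A: "K_irreducible K A"
    using irr unfolding irred_cont_def by blast
  have "grows_exponentially (jump_sg_strict M)"
  proof (rule grows_exponentially_if_irreducible_approximable[OF K A])
    show "X \<in> pi_cone K" if "X \<in> jump_sg_strict M t" for t X
      using that positive jump_sg_strict_pos[OF that] jump_sg_strict_subset unfolding S by fastforce
    show "X ** Y \<in> jump_sg_strict M (s + t)" if "X \<in> jump_sg_strict M s" "Y \<in> jump_sg_strict M t" for s t X Y
      using jump_sg_strict_mult[OF that(2,1)] by (simp add: add.commute)
    show "\<exists>T\<ge>0. \<exists>B\<in>convex hull jump_sg_strict M T. dist B A < \<eta>" if \<eta>: "0 < \<eta>" for \<eta>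
    proof -
      obtain e B where "0 < e" "B \<in> convex hull jump_sg_strict M (T + e)" "dist B A < \<eta>"
        using jump_sg_approx_by_strict[OF A_hull \<eta>] by blast
      moreover from this have "jump_sg_strict M (T + e) \<noteq> {}"
        by auto
      then have "0 < T + e"
        using jump_sg_strict_pos by blast
      ultimately show ?thesis by (intro exI[of _ "T + e"]) auto
    qed
    show "\<exists>a>0. \<exists>X\<in>jump_sg_strict M a. R \<le> norm X" for R
    proof (rule ccontr)
      assume "\<not> ?thesis"
      then have "norm Z < R" if "Z \<in> jump_sg_strict M t" for t Z
        using that jump_sg_strict_pos by (meson not_le)
      then have "bounded (\<Union>t. jump_sg M t)"
        by (intro bounded_jump_sg_if_bounded_strict[OF M] less_imp_le)
      moreover have "S \<subseteq> (\<Union>t. jump_sg M t)"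
        unfolding S by blast
      ultimately show False
        using unbounded bounded_subset by blast
    qed
  qed
  moreover have "jump_sg_strict M t \<subseteq> jump_sg M t" for t
    by (rule jump_sg_strict_subset)
  ultimately show False
    using not_grows_exponentially_if_jsr_cont_is_1[OF jsr] by blast
qed

text \<open>Compactness of \<open>M\<close> is needed only with jumps, where it bounds the projection that ends a
  product switched exactly at the final time.\<close>
theorem mainTheorem6:
  fixes K :: "(real^'n) set" and S :: "(real^'n^'n) set"
  assumes "proper_cone K"
    and "(\<exists>M. compact M \<and> S = (\<Union>t. disc_sg M t) \<and> S \<subseteq> pi_cone K \<and>
              irred_disc K (disc_sg M) \<and> jsr_disc_is (disc_sg M) 1)
       \<or> (\<exists>M. compact M \<and> S = (\<Union>t\<in>{0..}. cont_sg M t) \<and> S \<subseteq> pi_cone K \<and>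
              irred_cont K (cont_sg M) \<and> jsr_cont_is (cont_sg M) 1)
       \<or> (\<exists>M. jump_modes M \<and> S = (\<Union>t\<in>{0..}. jump_sg M t) \<and> S \<subseteq> pi_cone K \<and>
              irred_cont K (jump_sg M) \<and> jsr_cont_is (jump_sg M) 1)"
  shows "bounded S"
  using assms(2)
proof (elim disjE exE conjE)
  fix M
  assume "S = (\<Union>t. disc_sg M t)" "S \<subseteq> pi_cone K" "irred_disc K (disc_sg M)" "jsr_disc_is (disc_sg M) 1"
  then show ?thesis by (rule disc_sg_bounded[OF assms(1)])
next
  fix M
  assume "S = (\<Union>t\<in>{0..}. cont_sg M t)" "S \<subseteq> pi_cone K" "irred_cont K (cont_sg M)"
    "jsr_cont_is (cont_sg M) 1"
  then show ?thesis by (rule cont_sg_bounded[OF assms(1)])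
next
  fix M
  assume "jump_modes M" "S = (\<Union>t\<in>{0..}. jump_sg M t)" "S \<subseteq> pi_cone K"
    "irred_cont K (jump_sg M)" "jsr_cont_is (jump_sg M) 1"
  then show ?thesis by (rule jump_sg_bounded[OF assms(1)])
qed

end
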